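(* Let $\breve f\colon\{0,\dots,n\}\to\mathbb{Q}$ and $\breve g\colon\{0,\dots,m\}\to\mathbb{Q}$ be convex and $\breve h$ their min-plus convolution. For every $\delta\ge 0$, the sets $P^-_\delta$ and $P^+_\delta$ are monotone paths.
   Context: Convex means $F(i)-F(i-1)\le F(i+1)-F(i)$ for all interior $i$. $\breve h(k)=\min_{i+j=k}\breve f(i)+\breve g(j)$ for $k\in\{0,\dots,n+m\}$. A point is a pair $(i,j)\in\{0,\dots,n\}\times\{0,\dots,m\}$; it lies on diagonal $i+j$. It is $\delta$-relevant if $\breve f(i)+\breve g(j)\le\breve h(i+j)+\delta$. $P^+_\delta$ is the set of points $(i,k-i)$, $k\in\{0,\dots,n+m\}$, where $i$ is maximal such that $(i,k-i)$ is a $\delta$-relevant point; $P^-_\delta$ is defined likewise with $i$ minimal. A set of points $P$ is a monotone path if for every $k\in\{0,\dots,n+m\}$ it contains exactly one point $(i_k,j_k)$ on diagonal $k$, and $(i_{k+1},j_{k+1})\in\{(i_k+1,j_k),(i_k,j_k+1)\}$ for all $k\in\{0,\dots,n+m-1\}$. *)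

theory Defs
  imports Complex_Main
begin

definition convex_on_range :: "nat \<Rightarrow> (nat \<Rightarrow> rat) \<Rightarrow> bool" where
  "convex_on_range n F \<longleftrightarrow>
     (\<forall>i. 0 < i \<and> i < n \<longrightarrow> F i - F (i - 1) \<le> F (i + 1) - F i)"

definition points :: "nat \<Rightarrow> nat \<Rightarrow> (nat \<times> nat) set" where
  "points n m = {0..n} \<times> {0..m}"

definition minplus_conv :: "nat \<Rightarrow> nat \<Rightarrow> (nat \<Rightarrow> rat) \<Rightarrow> (nat \<Rightarrow> rat) \<Rightarrow> nat \<Rightarrow> rat" where
  "minplus_conv n m f g k = Min {f i + g j | i j. (i, j) \<in> points n m \<and> i + j = k}"

definition relevant :: "nat \<Rightarrow> nat \<Rightarrow> (nat \<Rightarrow> rat) \<Rightarrow> (nat \<Rightarrow> rat) \<Rightarrow> rat \<Rightarrow> nat \<times> nat \<Rightarrow> bool" where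
  "relevant n m f g \<delta> p \<longleftrightarrow>
     p \<in> points n m \<and> f (fst p) + g (snd p) \<le> minplus_conv n m f g (fst p + snd p) + \<delta>"

definition P_plus :: "nat \<Rightarrow> nat \<Rightarrow> (nat \<Rightarrow> rat) \<Rightarrow> (nat \<Rightarrow> rat) \<Rightarrow> rat \<Rightarrow> (nat \<times> nat) set" where
  "P_plus n m f g \<delta> =
     {(i, k - i) | i k. k \<le> n + m \<and> i \<le> k \<and> relevant n m f g \<delta> (i, k - i) \<and>
        (\<forall>i'. i' \<le> k \<and> relevant n m f g \<delta> (i', k - i') \<longrightarrow> i' \<le> i)}"

definition P_minus :: "nat \<Rightarrow> nat \<Rightarrow> (nat \<Rightarrow> rat) \<Rightarrow> (nat \<Rightarrow> rat) \<Rightarrow> rat \<Rightarrow> (nat \<times> nat) set" where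
  "P_minus n m f g \<delta> =
     {(i, k - i) | i k. k \<le> n + m \<and> i \<le> k \<and> relevant n m f g \<delta> (i, k - i) \<and>
        (\<forall>i'. i' \<le> k \<and> relevant n m f g \<delta> (i', k - i') \<longrightarrow> i \<le> i')}"

definition monotone_path :: "nat \<Rightarrow> nat \<Rightarrow> (nat \<times> nat) set \<Rightarrow> bool" where
  "monotone_path n m P \<longleftrightarrow>
     P \<subseteq> points n m \<and>
     (\<forall>k \<le> n + m. \<exists>!p. p \<in> P \<and> fst p + snd p = k) \<and>
     (\<forall>k < n + m. \<forall>p q. p \<in> P \<and> fst p + snd p = k \<and> q \<in> P \<and> fst q + snd q = k + 1 \<longrightarrow>
         q = (fst p + 1, snd p) \<or> q = (fst p, snd p + 1))"

end

theory Submission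
  imports Defs
begin

text \<open>A relevant point on diagonal k can be pushed one step along the diagonal k \<plusminus> 1 towards an
  optimal point q there: by convexity the two moved points have total cost at most the old total,
  and the moved copy of q cannot beat the optimum, so the moved relevant point stays within
  \<delta> of the optimum. Consequently the extreme relevant indices on consecutive diagonals differ by
  0 or 1.\<close>

lemma convex_on_range_diff_mono:
  assumes "convex_on_range N F" and "a \<le> b" and "b < N"
  shows "F (Suc a) - F a \<le> F (Suc b) - F b"
  using assms(2,3)
proof (induction b rule: dec_induct)
  case (step b)
  have "F (Suc b) - F (Suc b - 1) \<le> F (Suc b + 1) - F (Suc b)"
    using assms(1) step.prems unfolding convex_on_range_def by auto
  with step show ?case by simp
qed simp

lemma convex_on_range_exchange:
  assumes "convex_on_range N F" and "a < b" and "b \<le> N"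
  shows "F (Suc a) + F (b - 1) \<le> F a + F b"
proof -
  have "F (Suc a) - F a \<le> F (Suc (b - 1)) - F (b - 1)"
    by (rule convex_on_range_diff_mono[OF assms(1)]) (use assms(2,3) in auto)
  with assms(2) show ?thesis by simp
qed

lemma finite_minplus_set: "finite {f i + g j | i j. (i, j) \<in> points n m \<and> i + j = k}"
proof -
  have "{f i + g j | i j. (i, j) \<in> points n m \<and> i + j = k}
        \<subseteq> (\<lambda>p. f (fst p) + g (snd p)) ` points n m" by force
  then show ?thesis by (rule finite_subset) (simp add: points_def)
qed

lemma minplus_conv_le:
  assumes "(i, j) \<in> points n m"
  shows "minplus_conv n m f g (i + j) \<le> f i + g j"
  unfolding minplus_conv_def by (rule Min_le[OF finite_minplus_set]) (use assms in blast)

lemma minplus_conv_swap: "minplus_conv m n g f k = minplus_conv n m f g k"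
proof -
  have "{g j + f i | j i. (j, i) \<in> points m n \<and> j + i = k} =
        {f i + g j | i j. (i, j) \<in> points n m \<and> i + j = k}"
    by (auto simp: points_def) (metis add.commute)+
  then show ?thesis by (simp add: minplus_conv_def)
qed

lemma relevant_swap: "relevant m n g f \<delta> (j, i) \<longleftrightarrow> relevant n m f g \<delta> (i, j)"
  by (auto simp: relevant_def points_def minplus_conv_swap add.commute)

lemma relevant_mono: "relevant n m f g \<delta> p \<Longrightarrow> \<delta> \<le> \<delta>' \<Longrightarrow> relevant n m f g \<delta>' p"
  by (auto simp: relevant_def)

lemma exists_optimal_on_diagonal:
  assumes "k \<le> n + m"
  obtains i where "i \<le> k" "relevant n m f g 0 (i, k - i)"
proof -
  let ?A = "{f i + g j | i j. (i, j) \<in> points n m \<and> i + j = k}"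
  have "(min k n, k - min k n) \<in> points n m" using assms by (auto simp: points_def)
  then have "?A \<noteq> {}" by force
  with finite_minplus_set have "Min ?A \<in> ?A" by (rule Min_in)
  then obtain i j where "(i, j) \<in> points n m" "i + j = k" "f i + g j = minplus_conv n m f g k"
    unfolding minplus_conv_def by force
  then show ?thesis using that[of i] by (auto simp: relevant_def)
qed

lemma relevant_exchange:
  assumes "relevant n m f g \<delta> (i, j)" and "relevant n m f g 0 (i', j')"
    and "(a, b) \<in> points n m" and "(a', b') \<in> points n m"
    and "a + b = i' + j'" and "a' + b' = i + j"
    and "f a + g b + (f a' + g b') \<le> f i + g j + (f i' + g j')"
  shows "relevant n m f g \<delta> (a, b)"
  using assms minplus_conv_le[OF assms(4), of f g] by (auto simp: relevant_def)

lemma relevant_Suc_fst: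
  assumes "convex_on_range n f"
    and "relevant n m f g \<delta> (i, j)" and "relevant n m f g 0 (i', j')"
    and "i < i'" and "i' + j' = Suc (i + j)"
  shows "relevant n m f g \<delta> (Suc i, j)"
proof (rule relevant_exchange[OF assms(2,3), of _ _ "i' - 1" j'])
  have "i' \<le> n" "j \<le> m" "j' \<le> m" using assms(2,3) by (auto simp: relevant_def points_def)
  then show "(Suc i, j) \<in> points n m" "(i' - 1, j') \<in> points n m"
    using assms(4) by (auto simp: points_def)
  show "f (Suc i) + g j + (f (i' - 1) + g j') \<le> f i + g j + (f i' + g j')"
    using convex_on_range_exchange[OF assms(1,4) \<open>i' \<le> n\<close>] by simp
qed (use assms(4,5) in auto)

lemma relevant_pred_fst:
  assumes "convex_on_range n f"
    and "relevant n m f g \<delta> (i, j)" and "relevant n m f g 0 (i', j')"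
    and "i' < i" and "i + j = Suc (i' + j')"
  shows "relevant n m f g \<delta> (i - 1, j)"
proof (rule relevant_exchange[OF assms(2,3), of _ _ "Suc i'" j'])
  have "i \<le> n" "j \<le> m" "j' \<le> m" using assms(2,3) by (auto simp: relevant_def points_def)
  then show "(i - 1, j) \<in> points n m" "(Suc i', j') \<in> points n m"
    using assms(4) by (auto simp: points_def)
  show "f (i - 1) + g j + (f (Suc i') + g j') \<le> f i + g j + (f i' + g j')"
    using convex_on_range_exchange[OF assms(1,4) \<open>i \<le> n\<close>] by simp
qed (use assms(4,5) in auto)

lemma relevant_Suc_snd:
  assumes "convex_on_range m g"
    and "relevant n m f g \<delta> (i, j)" and "relevant n m f g 0 (i', j')"
    and "j < j'" and "i' + j' = Suc (i + j)"
  shows "relevant n m f g \<delta> (i, Suc j)"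
  using relevant_Suc_fst[of m g n f \<delta> j i j' i'] assms by (simp add: relevant_swap add.commute)

lemma relevant_pred_snd:
  assumes "convex_on_range m g"
    and "relevant n m f g \<delta> (i, j)" and "relevant n m f g 0 (i', j')"
    and "j' < j" and "i + j = Suc (i' + j')"
  shows "relevant n m f g \<delta> (i, j - 1)"
  using relevant_pred_fst[of m g n f \<delta> j i j' i'] assms by (simp add: relevant_swap add.commute)

lemma Max_le_Max_dominated:
  fixes A B :: "'a::linorder set"
  assumes "finite A" and "B \<noteq> {}" and "finite B" and "\<forall>b\<in>B. \<exists>a\<in>A. b \<le> a"
  shows "Max B \<le> Max A"
  using assms by (metis Max_ge Max_in order.trans)

lemma Min_le_Min_dominated:
  fixes A B :: "'a::linorder set"
  assumes "finite A" and "B \<noteq> {}" and "finite B" and "\<forall>b\<in>B. \<exists>a\<in>A. a \<le> b"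
  shows "Min A \<le> Min B"
  using assms by (metis Min_le Min_in order.trans)

lemma monotone_path_graph:
  assumes on_grid: "\<And>k. k \<le> n + m \<Longrightarrow> c k \<le> k \<and> (c k, k - c k) \<in> points n m"
    and unit_steps: "\<And>k. k < n + m \<Longrightarrow> c k \<le> c (Suc k) \<and> c (Suc k) \<le> Suc (c k)"
  shows "monotone_path n m {(c k, k - c k) | k. k \<le> n + m}"
proof -
  let ?P = "{(c k, k - c k) | k. k \<le> n + m}"
  have on_diag: "p \<in> ?P \<and> fst p + snd p = k \<longleftrightarrow> k \<le> n + m \<and> p = (c k, k - c k)" for p k
    using on_grid by fastforce
  have step: "(c (Suc k), Suc k - c (Suc k)) = (c k + 1, k - c k) \<or>
      (c (Suc k), Suc k - c (Suc k)) = (c k, k - c k + 1)" if "k < n + m" for k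
  proof -
    have "c k \<le> k" using on_grid that by simp
    with unit_steps[OF that] show ?thesis by (cases "c (Suc k) = c k") auto
  qed
  show ?thesis
    unfolding monotone_path_def
  proof (intro conjI allI impI)
    show "?P \<subseteq> points n m" using on_grid by blast
  next
    fix k assume "k \<le> n + m"
    then show "\<exists>!p. p \<in> ?P \<and> fst p + snd p = k" unfolding on_diag by blast
  next
    fix k p q
    assume "k < n + m" and "p \<in> ?P \<and> fst p + snd p = k \<and> q \<in> ?P \<and> fst q + snd q = k + 1"
    then have "p \<in> ?P \<and> fst p + snd p = k" and "q \<in> ?P \<and> fst q + snd q = Suc k"
      by simp_all
    then have p: "p = (c k, k - c k)" and q: "q = (c (Suc k), Suc k - c (Suc k))"
      unfolding on_diag by simp_all
    show "q = (fst p + 1, snd p) \<or> q = (fst p, snd p + 1)"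
      using step[OF \<open>k < n + m\<close>] unfolding p q fst_conv snd_conv .
  qed
qed

definition relevant_diag :: "nat \<Rightarrow> nat \<Rightarrow> (nat \<Rightarrow> rat) \<Rightarrow> (nat \<Rightarrow> rat) \<Rightarrow> rat \<Rightarrow> nat \<Rightarrow> nat set" where
  "relevant_diag n m f g \<delta> k = {i. i \<le> k \<and> relevant n m f g \<delta> (i, k - i)}"

lemma finite_relevant_diag: "finite (relevant_diag n m f g \<delta> k)"
  by (rule finite_subset[of _ "{..k}"]) (auto simp: relevant_diag_def)

lemma relevant_diag_nonempty:
  "0 \<le> \<delta> \<Longrightarrow> k \<le> n + m \<Longrightarrow> relevant_diag n m f g \<delta> k \<noteq> {}"
  by (rule exists_optimal_on_diagonal) (auto simp: relevant_diag_def intro: relevant_mono)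

lemma relevant_diag_points:
  "i \<in> relevant_diag n m f g \<delta> k \<Longrightarrow> i \<le> k \<and> (i, k - i) \<in> points n m"
  by (simp add: relevant_diag_def relevant_def)

context
  fixes n m :: nat and f g :: "nat \<Rightarrow> rat" and \<delta> :: rat
  assumes convex_f: "convex_on_range n f" and convex_g: "convex_on_range m g"
    and nonneg: "0 \<le> \<delta>"
begin

lemma relevant_diag_forward_ge:
  assumes "k < n + m" and "i \<in> relevant_diag n m f g \<delta> k"
  shows "\<exists>i'\<in>relevant_diag n m f g \<delta> (Suc k). i \<le> i'"
proof -
  obtain i' where opt: "i' \<le> Suc k" "relevant n m f g 0 (i', Suc k - i')"
    using exists_optimal_on_diagonal assms(1) by (metis Suc_leI)
  show ?thesis
  proof (cases "i < i'")
    case True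
    with opt nonneg show ?thesis by (auto simp: relevant_diag_def intro: relevant_mono)
  next
    case False
    with assms(2) opt have "relevant n m f g \<delta> (i, Suc (k - i))"
      by (intro relevant_Suc_snd[OF convex_g _ opt(2)]) (auto simp: relevant_diag_def)
    with assms(2) have "i \<in> relevant_diag n m f g \<delta> (Suc k)"
      by (auto simp: relevant_diag_def Suc_diff_le)
    then show ?thesis by blast
  qed
qed

lemma relevant_diag_forward_le:
  assumes "k < n + m" and "i \<in> relevant_diag n m f g \<delta> k"
  shows "\<exists>i'\<in>relevant_diag n m f g \<delta> (Suc k). i' \<le> Suc i"
proof -
  obtain i' where opt: "i' \<le> Suc k" "relevant n m f g 0 (i', Suc k - i')"
    using exists_optimal_on_diagonal assms(1) by (metis Suc_leI)
  show ?thesis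
  proof (cases "i' \<le> Suc i")
    case True
    with opt nonneg show ?thesis by (auto simp: relevant_diag_def intro: relevant_mono)
  next
    case False
    with assms(2) opt have "relevant n m f g \<delta> (Suc i, k - i)"
      by (intro relevant_Suc_fst[OF convex_f _ opt(2)]) (auto simp: relevant_diag_def)
    with assms(2) show ?thesis by (auto simp: relevant_diag_def)
  qed
qed

lemma relevant_diag_backward_le:
  assumes "k < n + m" and "i \<in> relevant_diag n m f g \<delta> (Suc k)"
  shows "\<exists>i'\<in>relevant_diag n m f g \<delta> k. i' \<le> i"
proof -
  obtain i' where opt: "i' \<le> k" "relevant n m f g 0 (i', k - i')"
    using exists_optimal_on_diagonal assms(1) by (metis less_imp_le)
  show ?thesis
  proof (cases "i' \<le> i")
    case True
    with opt nonneg show ?thesis by (auto simp: relevant_diag_def intro: relevant_mono)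
  next
    case False
    with assms(2) opt have "relevant n m f g \<delta> (i, Suc k - i - 1)"
      by (intro relevant_pred_snd[OF convex_g _ opt(2)]) (auto simp: relevant_diag_def)
    with False opt have "i \<in> relevant_diag n m f g \<delta> k"
      by (auto simp: relevant_diag_def)
    then show ?thesis by blast
  qed
qed

lemma relevant_diag_backward_ge:
  assumes "k < n + m" and "i \<in> relevant_diag n m f g \<delta> (Suc k)"
  shows "\<exists>i'\<in>relevant_diag n m f g \<delta> k. i \<le> Suc i'"
proof -
  obtain i' where opt: "i' \<le> k" "relevant n m f g 0 (i', k - i')"
    using exists_optimal_on_diagonal assms(1) by (metis less_imp_le)
  show ?thesis
  proof (cases "i \<le> Suc i'")
    case True
    with opt nonneg show ?thesis by (auto simp: relevant_diag_def intro: relevant_mono)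
  next
    case False
    with assms(2) opt have "relevant n m f g \<delta> (i - 1, Suc k - i)"
      by (intro relevant_pred_fst[OF convex_f _ opt(2)]) (auto simp: relevant_diag_def)
    with assms(2) False have "i - 1 \<in> relevant_diag n m f g \<delta> k"
      by (auto simp: relevant_diag_def)
    then show ?thesis by force
  qed
qed

lemma relevant_diag_Max_steps:
  assumes "k < n + m"
  shows "Max (relevant_diag n m f g \<delta> k) \<le> Max (relevant_diag n m f g \<delta> (Suc k)) \<and>
    Max (relevant_diag n m f g \<delta> (Suc k)) \<le> Suc (Max (relevant_diag n m f g \<delta> k))"
proof
  have nonempty: "relevant_diag n m f g \<delta> k \<noteq> {}" "relevant_diag n m f g \<delta> (Suc k) \<noteq> {}"
    using assms relevant_diag_nonempty[OF nonneg] by simp_all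
  then show "Max (relevant_diag n m f g \<delta> k) \<le> Max (relevant_diag n m f g \<delta> (Suc k))"
    using relevant_diag_forward_ge[OF assms]
    by (intro Max_le_Max_dominated finite_relevant_diag) auto
  have "Max (relevant_diag n m f g \<delta> (Suc k)) \<le> Max (Suc ` relevant_diag n m f g \<delta> k)"
    using relevant_diag_backward_ge[OF assms] nonempty
    by (intro Max_le_Max_dominated finite_relevant_diag finite_imageI) auto
  also have "\<dots> = Suc (Max (relevant_diag n m f g \<delta> k))"
    using nonempty by (simp add: mono_Max_commute[symmetric] finite_relevant_diag mono_def)
  finally show "Max (relevant_diag n m f g \<delta> (Suc k)) \<le> Suc (Max (relevant_diag n m f g \<delta> k))" .
qed

lemma relevant_diag_Min_steps:
  assumes "k < n + m"
  shows "Min (relevant_diag n m f g \<delta> k) \<le> Min (relevant_diag n m f g \<delta> (Suc k)) \<and>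
    Min (relevant_diag n m f g \<delta> (Suc k)) \<le> Suc (Min (relevant_diag n m f g \<delta> k))"
proof
  have nonempty: "relevant_diag n m f g \<delta> k \<noteq> {}" "relevant_diag n m f g \<delta> (Suc k) \<noteq> {}"
    using assms relevant_diag_nonempty[OF nonneg] by simp_all
  then show "Min (relevant_diag n m f g \<delta> k) \<le> Min (relevant_diag n m f g \<delta> (Suc k))"
    using relevant_diag_backward_le[OF assms]
    by (intro Min_le_Min_dominated finite_relevant_diag) auto
  have "Min (relevant_diag n m f g \<delta> (Suc k)) \<le> Min (Suc ` relevant_diag n m f g \<delta> k)"
    using relevant_diag_forward_le[OF assms] nonempty
    by (intro Min_le_Min_dominated finite_relevant_diag finite_imageI) auto
  also have "\<dots> = Suc (Min (relevant_diag n m f g \<delta> k))"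
    using nonempty by (simp add: mono_Min_commute[symmetric] finite_relevant_diag mono_def)
  finally show "Min (relevant_diag n m f g \<delta> (Suc k)) \<le> Suc (Min (relevant_diag n m f g \<delta> k))" .
qed

end

lemma diagonal_graph_eq:
  assumes "\<And>i k. k \<le> N \<Longrightarrow> E k i \<longleftrightarrow> i = c k"
  shows "{(i, k - i) | i k. k \<le> N \<and> E k i} = {(c k, k - c k) | k. k \<le> N}"
proof (intro set_eqI iffI)
  fix x assume "x \<in> {(i, k - i) | i k. k \<le> N \<and> E k i}"
  then obtain i k where x: "x = (i, k - i)" and k: "k \<le> N" and "E k i" by blast
  then have "i = c k" using assms by simp
  with x k show "x \<in> {(c k, k - c k) | k. k \<le> N}" by blast
next
  fix x assume "x \<in> {(c k, k - c k) | k. k \<le> N}"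
  then obtain k where x: "x = (c k, k - c k)" and k: "k \<le> N" by blast
  then have "E k (c k)" using assms by simp
  with x k show "x \<in> {(i, k - i) | i k. k \<le> N \<and> E k i}" by blast
qed

lemma P_plus_eq_Max:
  assumes "0 \<le> \<delta>"
  shows "P_plus n m f g \<delta> =
    {(Max (relevant_diag n m f g \<delta> k), k - Max (relevant_diag n m f g \<delta> k)) | k. k \<le> n + m}"
proof -
  have "P_plus n m f g \<delta> = {(i, k - i) | i k. k \<le> n + m \<and>
      (i \<in> relevant_diag n m f g \<delta> k \<and> (\<forall>i'\<in>relevant_diag n m f g \<delta> k. i' \<le> i))}"
    unfolding P_plus_def relevant_diag_def by simp
  also have "\<dots> = {(Max (relevant_diag n m f g \<delta> k), k - Max (relevant_diag n m f g \<delta> k)) | k. k \<le> n + m}"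
    using Max_eq_iff[OF finite_relevant_diag relevant_diag_nonempty[OF assms]]
    by (intro diagonal_graph_eq) (simp add: eq_commute)
  finally show ?thesis .
qed

lemma P_minus_eq_Min:
  assumes "0 \<le> \<delta>"
  shows "P_minus n m f g \<delta> =
    {(Min (relevant_diag n m f g \<delta> k), k - Min (relevant_diag n m f g \<delta> k)) | k. k \<le> n + m}"
proof -
  have "P_minus n m f g \<delta> = {(i, k - i) | i k. k \<le> n + m \<and>
      (i \<in> relevant_diag n m f g \<delta> k \<and> (\<forall>i'\<in>relevant_diag n m f g \<delta> k. i \<le> i'))}"
    unfolding P_minus_def relevant_diag_def by simp
  also have "\<dots> = {(Min (relevant_diag n m f g \<delta> k), k - Min (relevant_diag n m f g \<delta> k)) | k. k \<le> n + m}"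
    using Min_eq_iff[OF finite_relevant_diag relevant_diag_nonempty[OF assms]]
    by (intro diagonal_graph_eq) (simp add: eq_commute)
  finally show ?thesis .
qed

theorem mainTheorem12:
  fixes n m :: nat and f g :: "nat \<Rightarrow> rat" and \<delta> :: rat
  assumes "convex_on_range n f" and "convex_on_range m g" and "\<delta> \<ge> 0"
  shows "monotone_path n m (P_minus n m f g \<delta>) \<and> monotone_path n m (P_plus n m f g \<delta>)"
proof
  let ?D = "relevant_diag n m f g \<delta>"
  have extremes: "Min (?D k) \<in> ?D k" "Max (?D k) \<in> ?D k" if "k \<le> n + m" for k
    using relevant_diag_nonempty[OF assms(3) that] finite_relevant_diag by (auto intro: Min_in Max_in)
  have Min_on_grid: "Min (?D k) \<le> k \<and> (Min (?D k), k - Min (?D k)) \<in> points n m"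
    and Max_on_grid: "Max (?D k) \<le> k \<and> (Max (?D k), k - Max (?D k)) \<in> points n m"
    if "k \<le> n + m" for k
    using relevant_diag_points[OF extremes(1)[OF that]] relevant_diag_points[OF extremes(2)[OF that]] .
  show "monotone_path n m (P_minus n m f g \<delta>)"
    unfolding P_minus_eq_Min[OF assms(3)]
    using Min_on_grid relevant_diag_Min_steps[OF assms] by (rule monotone_path_graph)
  show "monotone_path n m (P_plus n m f g \<delta>)"
    unfolding P_plus_eq_Max[OF assms(3)]
    using Max_on_grid relevant_diag_Max_steps[OF assms] by (rule monotone_path_graph)
qed

end
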